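(* Let $n\ge3$ and $e_1,\dots,e_n\ge1$ be integers with $E=e_1\cdots e_n\ge2$. Let $p$ be a prime with $p>\max\{e_1,\dots,e_n\}$ such that the only solution of $x^{E-1}=1$ in $\mathbf F_p$ is $x=1$. Then the action of $G=G_{\mathbf F_p,n;e_1,\dots,e_n}$ on $\mathbf F_p^n$ fixes $0$ and is $(p-1)$-transitive on $\mathbf F_p^n\setminus\{0\}$.
   Context: $R_n=\mathbf F_p[x_1,\dots,x_n]$; $\alpha_{i;j}^{(e)}(r)\in\mathrm{Aut}(R_n)$ maps $x_i\mapsto x_i+rx_j^e$ and fixes other variables; $G_{\mathbf F_p,n;e_1,\dots,e_n}$ is generated by $\alpha_{i;i+1}^{(e_i)}(1)$, $1\le i\le n$, indices modulo $n$. For a commutative $\mathbf F_p$-algebra $A$, $\mathrm{Aut}(R_n)$ acts on $A^n$ (identified with $\mathrm{Hom}_{\mathbf F_p\text{-alg}}(R_n,A)$ via $\phi\mapsto(\phi(x_1),\dots,\phi(x_n))$) by $\phi\mapsto\phi\circ g^{-1}$; i.e. $g$ sends $a=(a_1,\dots,a_n)$ to $\big(g^{-1}(x_1)(a),\dots,g^{-1}(x_n)(a)\big)$. *)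

theory Defs
  imports "HOL-Number_Theory.Number_Theory"
begin

text \<open>Points of F_p^n are functions nat => int, coordinates 0..n-1 (0-based) taking values
in {0..<p}, and 0 outside {0..<n}. Indices are taken modulo n.\<close>

definition Fpn :: "nat \<Rightarrow> nat \<Rightarrow> (nat \<Rightarrow> int) set" where
  "Fpn p n = {a. (\<forall>i<n. 0 \<le> a i \<and> a i < int p) \<and> (\<forall>i\<ge>n. a i = 0)}"

definition zeroPt :: "nat \<Rightarrow> int" where
  "zeroPt = (\<lambda>_. 0)"

text \<open>Action of the generator alpha_{i;i+1}^{(e_i)}(1) on points: since
 alpha^{-1}(x_i) = x_i - x_{i+1}^{e_i}, the point a is sent to a with a_i replaced
 by a_i - a_{i+1}^{e_i} (mod p).\<close>

definition genAct :: "nat \<Rightarrow> nat \<Rightarrow> (nat \<Rightarrow> nat) \<Rightarrow> nat \<Rightarrow> (nat \<Rightarrow> int) \<Rightarrow> (nat \<Rightarrow> int)" where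
  "genAct p n e i a = a(i := (a i - a ((i + 1) mod n) ^ e i) mod int p)"

definition genActInv :: "nat \<Rightarrow> nat \<Rightarrow> (nat \<Rightarrow> nat) \<Rightarrow> nat \<Rightarrow> (nat \<Rightarrow> int) \<Rightarrow> (nat \<Rightarrow> int)" where
  "genActInv p n e i a = a(i := (a i + a ((i + 1) mod n) ^ e i) mod int p)"

text \<open>Image of G_{F_p,n;e} in the permutations of F_p^n: the group generated by the
 actions of the generators (all words in generators and their inverses).\<close>

inductive_set Gact :: "nat \<Rightarrow> nat \<Rightarrow> (nat \<Rightarrow> nat) \<Rightarrow> ((nat \<Rightarrow> int) \<Rightarrow> (nat \<Rightarrow> int)) set"
  for p n e where
  Gact_id: "id \<in> Gact p n e"
| Gact_gen: "g \<in> Gact p n e \<Longrightarrow> i < n \<Longrightarrow> genAct p n e i \<circ> g \<in> Gact p n e"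
| Gact_inv: "g \<in> Gact p n e \<Longrightarrow> i < n \<Longrightarrow> genActInv p n e i \<circ> g \<in> Gact p n e"

definition k_transitive_on :: "nat \<Rightarrow> ('a \<Rightarrow> 'a) set \<Rightarrow> 'a set \<Rightarrow> bool" where
  "k_transitive_on k G X \<longleftrightarrow>
     (\<forall>xs ys. length xs = k \<and> length ys = k \<and> distinct xs \<and> distinct ys \<and>
        set xs \<subseteq> X \<and> set ys \<subseteq> X \<longrightarrow> (\<exists>g\<in>G. map g xs = ys))"

end

theory Submission
  imports Defs
begin

text \<open>
  Call the map \<open>x_i \<mapsto> x_i + h\<close>, with \<open>h\<close> not involving \<open>x_i\<close>, realizable if it acts on
  \<open>F_p^n\<close> as an element of \<open>G\<close>. For fixed \<open>i\<close> the realizable \<open>h\<close> form a group, and the commutator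
  of realizable maps in directions \<open>i \<noteq> j\<close> realizes \<open>f - f \<circ> T_j(g)\<close>. If \<open>f = r x_j^b\<close>, expanding
  these commutators for the multiples \<open>d g\<close> binomially in \<open>d\<close> and averaging with weights
  \<open>d^(p-1-k)\<close> over \<open>F_p^*\<close> isolates one binomial term; in particular \<open>x_j^b\<close> may be replaced by
  \<open>g^b\<close>. Starting from the generator \<open>x_(i+1)^(e_i)\<close> and substituting once around the cycle turns a
  realizable \<open>x_(i+1)^A\<close> into \<open>x_(i+1)^(A-1+E)\<close>. The hypothesis on \<open>x^(E-1) = 1\<close> says that
  \<open>E - 1\<close> is prime to \<open>p - 1\<close>, so the exponents reach every residue modulo \<open>p - 1\<close>: all monomials
  \<open>x_(i+1)^s\<close> are realizable, and by Lagrange interpolation so are the indicator maps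
  \<open>x_i \<mapsto> x_i + w [x_(i+1) = v]\<close> for \<open>v \<noteq> 0\<close>. These move any nonzero point other than
  \<open>(1,0,...,0), ..., (m,0,...,0)\<close> to \<open>(m+1,0,...,0)\<close> while fixing those points, which gives
  \<open>(p - 1)\<close>-transitivity.
\<close>

section \<open>Arithmetic modulo a prime\<close>

lemma fermat_little_int:
  assumes "prime p"
  shows "[(x::int) ^ p = x] (mod int p)"
proof -
  define y where "y = nat (x mod int p)"
  have p_pos: "int p > 0" using assms prime_gt_0_nat by auto
  have xy: "[x = int y] (mod int p)" unfolding y_def cong_def using p_pos by simp
  have "[y ^ p = y] (mod p)"
  proof (cases "p dvd y")
    case True
    then have y0: "[y = 0] (mod p)" by (simp add: cong_0_iff)
    then have "[y ^ p = 0 ^ p] (mod p)" by (rule cong_pow)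
    then have "[y ^ p = 0] (mod p)" using prime_gt_0_nat[OF assms] by (simp add: zero_power)
    then show ?thesis using cong_sym[OF y0] by (rule cong_trans)
  next
    case False
    then have "[y ^ (p - 1) * y = 1 * y] (mod p)"
      using fermat_theorem[OF assms] by (intro cong_mult cong_refl)
    moreover have "y ^ (p - 1) * y = y ^ p" using assms prime_gt_0_nat
      by (metis Suc_diff_1 mult.commute power_Suc)
    ultimately show ?thesis by simp
  qed
  then have "[int y ^ p = int y] (mod int p)" by (metis cong_int_iff of_nat_power)
  with cong_pow[OF xy] have "[x ^ p = int y] (mod int p)" by (rule cong_trans)
  then show ?thesis using cong_sym[OF xy] by (rule cong_trans)
qed

lemma fermat_little_int_unit:
  assumes "prime p" and "\<not> int p dvd y"
  shows "[y ^ (p - 1) = 1] (mod int p)"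
proof -
  have "y ^ p = y * y ^ (p - 1)" using prime_gt_0_nat[OF assms(1)]
    by (metis Suc_diff_1 power_Suc)
  then have "int p dvd y * (y ^ (p - 1) - 1)"
    using fermat_little_int[OF assms(1), of y]
    by (simp add: cong_iff_dvd_diff algebra_simps dvd_diff_commute)
  then show ?thesis
    using assms prime_dvd_mult_iff[of "int p"] by (simp add: cong_iff_dvd_diff)
qed

lemma power_add_mult_pred_cong:
  assumes "prime p" and "1 \<le> m"
  shows "[(x::int) ^ (m + k * (p - 1)) = x ^ m] (mod int p)"
proof (induction k)
  case (Suc k)
  define c where "c = m + k * (p - 1) - 1"
  have "m + Suc k * (p - 1) = c + p" and "m + k * (p - 1) = Suc c"
    using assms prime_gt_1_nat[OF assms(1)] unfolding c_def by auto
  moreover have "[x ^ c * x ^ p = x ^ c * x] (mod int p)"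
    using fermat_little_int[OF assms(1)] by (intro cong_mult cong_refl)
  ultimately have "[x ^ (m + Suc k * (p - 1)) = x ^ (m + k * (p - 1))] (mod int p)"
    by (simp only: power_add power_Suc mult.commute)
  then show ?case using Suc.IH by (rule cong_trans)
qed simp

lemma power_cong_exponent:
  assumes "prime p" and "1 \<le> c" and "1 \<le> d" and "[c = d] (mod p - 1)"
  shows "[(x::int) ^ c = x ^ d] (mod int p)"
proof -
  have *: "[(x::int) ^ c = x ^ d] (mod int p)"
    if d_pos: "1 \<le> d" and dc: "d \<le> c" and cd: "[c = d] (mod p - 1)" for c d
  proof -
    obtain k where "c = k * (p - 1) + d" using cd cong_le_nat[OF dc] by blast
    then show ?thesis
      using power_add_mult_pred_cong[OF assms(1) d_pos, of x k] by (simp add: add.commute)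
  qed
  show ?thesis
  proof (cases "d \<le> c")
    case True
    then show ?thesis using *[of d c] assms by blast
  next
    case False
    then have "[x ^ d = x ^ c] (mod int p)" using *[of c d] assms(2) cong_sym[OF assms(4)] by simp
    then show ?thesis by (rule cong_sym)
  qed
qed

lemma cong_representative:
  assumes "0 < (q::nat)"
  obtains b where "1 \<le> b" "b \<le> q" "[b = c] (mod q)"
proof
  show "1 \<le> (c + q - 1) mod q + 1" "(c + q - 1) mod q + 1 \<le> q"
    using assms by (simp_all add: Suc_leI)
  have "[(c + q - 1) mod q + 1 = (c + q - 1) + 1] (mod q)"
    by (intro cong_add cong_refl) (simp add: cong_def)
  also have "(c + q - 1) + 1 = c + q" using assms by simp
  also have "[c + q = c + 0] (mod q)" by (intro cong_add cong_refl) (simp add: cong_def)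
  finally show "[(c + q - 1) mod q + 1 = c] (mod q)" by simp
qed

lemma cong_eq_if_in_range:
  fixes x y q :: nat
  assumes "1 \<le> x" "x \<le> q" "1 \<le> y" "y \<le> q" "[x = y] (mod q)"
  shows "x = y"
proof -
  have "[x - 1 = y - 1] (mod q)"
    using assms cong_add_rcancel_nat[of "x - 1" 1 "y - 1" q] by simp
  then show ?thesis using assms cong_less_modulus_unique_nat[of "x - 1" "y - 1" q] by linarith
qed

lemma prime_dvd_sum_powers:
  assumes p: "prime p" and t: "\<not> (p - 1) dvd t"
  shows "int p dvd (\<Sum>d\<in>{1..<int p}. d ^ t)"
proof -
  obtain c where c: "residue_primroot p c"
    using prime_primitive_root_exists[OF prime_gt_1_nat[OF p] p] by blast
  have "ord p c = p - 1" using c p by (simp add: residue_primroot_def totient_prime)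
  then have "\<not> [c ^ t = 1] (mod p)" using ord_divides'[of c t p] t by simp
  then have not_one: "\<not> int p dvd int c ^ t - 1"
    by (metis cong_iff_dvd_diff cong_int_iff of_nat_1 of_nat_power)
  have "coprime (int c) (int p)" using c by (simp add: residue_primroot_def coprime_commute)
  note bij = bij_betw_int_remainders_mult[OF this]
  define S where "S = (\<Sum>d\<in>{1..<int p}. d ^ t)"
  have "S = (\<Sum>d\<in>{1..<int p}. (int c * d mod int p) ^ t)"
    unfolding S_def using sum.reindex_bij_betw[OF bij, of "\<lambda>d. d ^ t"] by simp
  also have "[\<dots> = (\<Sum>d\<in>{1..<int p}. (int c * d) ^ t)] (mod int p)"
    by (intro cong_sum cong_pow) (simp add: cong_def)
  also have "(\<Sum>d\<in>{1..<int p}. (int c * d) ^ t) = int c ^ t * S"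
    unfolding S_def by (simp add: power_mult_distrib sum_distrib_left)
  finally have "int p dvd (int c ^ t - 1) * S"
    by (simp add: cong_iff_dvd_diff algebra_simps dvd_diff_commute)
  then show ?thesis
    using not_one p prime_dvd_mult_iff[of "int p"] unfolding S_def by simp
qed

lemma sum_powers_mod_prime:
  assumes p: "prime p"
  shows "[(\<Sum>d\<in>{1..<int p}. d ^ t) = (if (p - 1) dvd t then -1 else 0)] (mod int p)"
proof (cases "(p - 1) dvd t")
  case True
  then obtain k where k: "t = (p - 1) * k" by (elim dvdE)
  have "[(\<Sum>d\<in>{1..<int p}. d ^ t) = (\<Sum>d\<in>{1..<int p}. 1)] (mod int p)"
  proof (rule cong_sum)
    fix d assume "d \<in> {1..<int p}"
    then have "\<not> int p dvd d" using zdvd_not_zless by auto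
    then have "[(d ^ (p - 1)) ^ k = 1 ^ k] (mod int p)"
      by (intro cong_pow fermat_little_int_unit p)
    then show "[d ^ t = 1] (mod int p)" by (simp add: k power_mult)
  qed
  also have "(\<Sum>d\<in>{1..<int p}. 1) = int p + (- 1 :: int)" using prime_gt_1_nat[OF p] by simp
  also have "[int p + (- 1) = 0 + (- 1)] (mod int p)" by (intro cong_add) (auto simp: cong_def)
  finally show ?thesis using True by simp
next
  case False
  then show ?thesis using prime_dvd_sum_powers[OF p False] by (simp add: cong_0_iff)
qed

lemma coprime_pred_if_trivial_roots:
  assumes p: "prime p" and k_pos: "1 \<le> k"
    and roots: "\<forall>x::int. 0 \<le> x \<and> x < int p \<and> [x ^ k = 1] (mod int p) \<longrightarrow> x = 1"
  shows "coprime k (p - 1)"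
proof (rule ccontr)
  assume "\<not> coprime k (p - 1)"
  define d where "d = gcd k (p - 1)"
  have "d \<noteq> 1" "d > 0" using \<open>\<not> coprime k (p - 1)\<close> k_pos
    unfolding d_def coprime_iff_gcd_eq_1 by auto
  obtain l where l: "p - 1 = d * l" unfolding d_def by (elim dvdE[OF gcd_dvd2])
  obtain j where j: "k = d * j" unfolding d_def by (elim dvdE[OF gcd_dvd1])
  have p1: "p > 1" using prime_gt_1_nat[OF p] .
  have l_pos: "l > 0" using l p1 by (cases "l = 0") auto
  have "2 * l \<le> d * l" using \<open>d \<noteq> 1\<close> \<open>d > 0\<close> by (intro mult_right_mono) auto
  then have l_lt: "l < p - 1" using l l_pos by linarith
  obtain c where c: "residue_primroot p c"
    using prime_primitive_root_exists[OF p1 p] by blast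
  have ord_c: "ord p c = p - 1" using c p by (simp add: residue_primroot_def totient_prime)
  \<comment> \<open>\<open>c ^ l\<close> has order \<open>d > 1\<close> and is therefore a nontrivial \<open>k\<close>-th root of unity\<close>
  define x where "x = c ^ l mod p"
  have "[x ^ k = (c ^ (p - 1)) ^ j] (mod p)"
    unfolding x_def using l j by (simp add: cong_def power_mod flip: power_mult) (simp add: ac_simps)
  also have "[(c ^ (p - 1)) ^ j = 1 ^ j] (mod p)"
    using ord_divides'[of c "p - 1" p] ord_c by (intro cong_pow) simp
  finally have "[int x ^ k = 1] (mod int p)"
    by (metis cong_int_iff of_nat_1 of_nat_power power_one)
  moreover have "int x < int p" using x_def p1 by simp
  ultimately have "x = 1" using roots[rule_format, of "int x"] by simp
  then have "ord p c dvd l"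
    using x_def p1 ord_divides'[of c l p] by (simp add: cong_def)
  then show False using ord_c l_pos l_lt by (simp add: nat_dvd_not_less)
qed

lemma binomial_ring_split:
  fixes x z :: "'a::comm_semiring_1"
  shows "(x + z) ^ b = x ^ b + (\<Sum>m\<in>{1..b}. of_nat (b choose m) * x ^ (b - m) * z ^ m)"
proof -
  have "(z + x) ^ b = (\<Sum>m\<le>b. of_nat (b choose m) * z ^ m * x ^ (b - m))"
    by (rule binomial_ring)
  also have "{..b} = insert 0 {1..b}" by auto
  also have "(\<Sum>m\<in>insert 0 {1..b}. of_nat (b choose m) * z ^ m * x ^ (b - m)) =
      x ^ b + (\<Sum>m\<in>{1..b}. of_nat (b choose m) * z ^ m * x ^ (b - m))"
    by (subst sum.insert) auto
  finally show ?thesis by (simp add: add.commute mult.commute mult.left_commute)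
qed

lemma prime_not_dvd_choose:
  assumes p: "prime p" and b: "b < p" and k: "k \<le> b"
  shows "\<not> p dvd (b choose k)"
proof
  assume "p dvd (b choose k)"
  then have "p dvd fact k * fact (b - k) * (b choose k)" by simp
  then have "p dvd fact b" using binomial_fact_lemma[OF k] by metis
  then show False using prime_dvd_fact_iff[OF p] b by simp
qed

lemma dvd_diff_add_iff:
  fixes q k m :: nat
  assumes "1 \<le> k" "k \<le> q" "1 \<le> m" "m \<le> q"
  shows "q dvd (q - k + m) \<longleftrightarrow> m = k"
proof
  assume "q dvd (q - k + m)"
  then obtain c where c: "q - k + m = q * c" by (elim dvdE)
  have "0 < q * c" "q * c < q * 2" using assms c by linarith+
  then have "0 < c" "c < 2" by simp_all
  then have "c = 1" by linarith
  then show "m = k" using c assms by simp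
qed (use assms in simp)

lemma power_sum_coefficient_cong:
  assumes p: "prime p" and k: "1 \<le> k" "k \<le> b" and b: "b \<le> p - 1"
  shows "[(\<Sum>d\<in>{1..<int p}. d ^ (p - 1 - k) * (\<Sum>m\<in>{1..b}. c m * d ^ m)) = - c k] (mod int p)"
proof -
  have "(\<Sum>d\<in>{1..<int p}. d ^ (p - 1 - k) * (\<Sum>m\<in>{1..b}. c m * d ^ m))
      = (\<Sum>m\<in>{1..b}. c m * (\<Sum>d\<in>{1..<int p}. d ^ (p - 1 - k + m)))"
    by (simp add: sum_distrib_left power_add algebra_simps) (rule sum.swap)
  also have "[\<dots> = (\<Sum>m\<in>{1..b}. c m * (if m = k then -1 else 0))] (mod int p)"
  proof (intro cong_sum cong_mult cong_refl)
    fix m assume "m \<in> {1..b}"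
    then have "(p - 1) dvd (p - 1 - k + m) \<longleftrightarrow> m = k"
      using k b by (intro dvd_diff_add_iff) auto
    then show "[(\<Sum>d\<in>{1..<int p}. d ^ (p - 1 - k + m)) = (if m = k then -1 else 0)] (mod int p)"
      using sum_powers_mod_prime[OF p, of "p - 1 - k + m"] by simp
  qed
  also have "(\<Sum>m\<in>{1..b}. c m * (if m = k then -1 else 0)) = - c k"
    using k by (simp add: if_distrib[of "\<lambda>x. c _ * x"] cong: if_cong)
  finally show ?thesis .
qed

lemma cong_add_mult_solvable:
  fixes a s u q :: nat
  assumes "0 < q" and "coprime u q"
  obtains m where "[a + m * u = s] (mod q)"
proof -
  obtain x where x: "[u * x = 1] (mod q)"
    using cong_solve_coprime_nat[OF assms(2)] by auto
  define t where "t = s + q * a - a"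
  have "a \<le> q * a" using assms(1) by simp
  then have "a + t = s + q * a" unfolding t_def by linarith
  then have "[a + t = s + q * a] (mod q)" by simp
  also have "[s + q * a = s] (mod q)" by (simp add: cong_def)
  finally have "[a + t = s] (mod q)" .
  moreover have "[a + (x * t) * u = a + t] (mod q)"
    using cong_mult[OF x cong_refl[of t]] by (intro cong_add cong_refl) (simp add: ac_simps)
  ultimately show ?thesis using that cong_trans by blast
qed

section \<open>The action of \<open>G\<close> on \<open>F_p^n\<close>\<close>

lemma Fpn_coord_range: "a \<in> Fpn p n \<Longrightarrow> 0 < p \<Longrightarrow> 0 \<le> a j \<and> a j < int p"
  unfolding Fpn_def by (cases "j < n") auto

lemma Fpn_upd: "a \<in> Fpn p n \<Longrightarrow> i < n \<Longrightarrow> 0 \<le> v \<Longrightarrow> v < int p \<Longrightarrow> a(i := v) \<in> Fpn p n"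
  unfolding Fpn_def by auto

lemma Fpn_upd_mod: "a \<in> Fpn p n \<Longrightarrow> i < n \<Longrightarrow> 0 < p \<Longrightarrow> a(i := v mod int p) \<in> Fpn p n"
  by (simp add: Fpn_upd)

lemma zeroPt_in_Fpn: "0 < p \<Longrightarrow> zeroPt \<in> Fpn p n"
  unfolding zeroPt_def Fpn_def by auto

lemma genAct_in_Gact: "i < n \<Longrightarrow> genAct p n e i \<in> Gact p n e"
  using Gact_gen[OF Gact_id] by simp

lemma genActInv_in_Gact: "i < n \<Longrightarrow> genActInv p n e i \<in> Gact p n e"
  using Gact_inv[OF Gact_id] by simp

lemma Gact_comp: "g \<in> Gact p n e \<Longrightarrow> h \<in> Gact p n e \<Longrightarrow> g \<circ> h \<in> Gact p n e"
  by (induction g rule: Gact.induct) (auto simp: comp_assoc intro: Gact.intros)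

lemma genAct_in_Fpn: "0 < p \<Longrightarrow> i < n \<Longrightarrow> a \<in> Fpn p n \<Longrightarrow> genAct p n e i a \<in> Fpn p n"
  unfolding genAct_def by (rule Fpn_upd_mod)

lemma genActInv_in_Fpn: "0 < p \<Longrightarrow> i < n \<Longrightarrow> a \<in> Fpn p n \<Longrightarrow> genActInv p n e i a \<in> Fpn p n"
  unfolding genActInv_def by (rule Fpn_upd_mod)

lemma Gact_maps_Fpn:
  assumes "0 < p" "g \<in> Gact p n e" "a \<in> Fpn p n"
  shows "g a \<in> Fpn p n"
  using assms(2) by (induction g rule: Gact.induct)
    (simp_all add: assms(1,3) genAct_in_Fpn genActInv_in_Fpn)

lemma Gact_fixes_zero:
  assumes "\<forall>i<n. 1 \<le> e i" and "g \<in> Gact p n e"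
  shows "g zeroPt = zeroPt"
  using assms(2)
proof (induction g rule: Gact.induct)
  case (Gact_gen g i)
  then show ?case using assms(1) by (simp add: genAct_def zeroPt_def Suc_le_eq zero_power)
next
  case (Gact_inv g i)
  then show ?case using assms(1) by (simp add: genActInv_def zeroPt_def Suc_le_eq zero_power)
qed simp

lemma succ_mod_neq:
  assumes "(2::nat) \<le> n" "i < n"
  shows "(i + 1) mod n \<noteq> i"
proof (cases "i + 1 < n")
  case False
  then have "i + 1 = n" using assms(2) by simp
  then show ?thesis using assms(1) by simp
qed simp

lemma genActInv_genAct:
  assumes "0 < p" "2 \<le> n" "i < n" "b \<in> Fpn p n"
  shows "genActInv p n e i (genAct p n e i b) = b"
  using assms Fpn_coord_range[OF assms(4) assms(1), of i] succ_mod_neq[OF assms(2,3)]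
  by (simp add: genAct_def genActInv_def mod_add_left_eq)

lemma genAct_genActInv:
  assumes "0 < p" "2 \<le> n" "i < n" "b \<in> Fpn p n"
  shows "genAct p n e i (genActInv p n e i b) = b"
  using assms Fpn_coord_range[OF assms(4) assms(1), of i] succ_mod_neq[OF assms(2,3)]
  by (simp add: genAct_def genActInv_def mod_diff_left_eq)

lemma Gact_left_inverse:
  assumes "0 < p" "2 \<le> n" "g \<in> Gact p n e"
  shows "\<exists>g'\<in>Gact p n e. \<forall>a\<in>Fpn p n. g' (g a) = a"
  using assms(3)
proof (induction g rule: Gact.induct)
  case Gact_id
  show ?case using Gact.Gact_id by (intro bexI[of _ id]) simp_all
next
  case (Gact_gen g i)
  then obtain g' where g': "g' \<in> Gact p n e" "\<forall>a\<in>Fpn p n. g' (g a) = a" by blast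
  show ?case
  proof (rule bexI)
    show "g' \<circ> genActInv p n e i \<in> Gact p n e"
      using g'(1) genActInv_in_Gact[OF Gact_gen(2)] by (rule Gact_comp)
    show "\<forall>a\<in>Fpn p n. (g' \<circ> genActInv p n e i) ((genAct p n e i \<circ> g) a) = a"
      using g'(2) Gact_maps_Fpn[OF assms(1) Gact_gen(1)] genActInv_genAct[OF assms(1,2) Gact_gen(2)]
      by simp
  qed
next
  case (Gact_inv g i)
  then obtain g' where g': "g' \<in> Gact p n e" "\<forall>a\<in>Fpn p n. g' (g a) = a" by blast
  show ?case
  proof (rule bexI)
    show "g' \<circ> genAct p n e i \<in> Gact p n e"
      using g'(1) genAct_in_Gact[OF Gact_inv(2)] by (rule Gact_comp)
    show "\<forall>a\<in>Fpn p n. (g' \<circ> genAct p n e i) ((genActInv p n e i \<circ> g) a) = a"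
      using g'(2) Gact_maps_Fpn[OF assms(1) Gact_inv(1)] genAct_genActInv[OF assms(1,2) Gact_inv(2)]
      by simp
  qed
qed

section \<open>Realizable transvections\<close>

locale cyclic_transvections =
  fixes p n :: nat and e :: "nat \<Rightarrow> nat"
  assumes n_ge_3: "3 \<le> n" and prime_p: "prime p"
    and e_pos: "\<And>i. i < n \<Longrightarrow> 1 \<le> e i" and e_lt_p: "\<And>i. i < n \<Longrightarrow> e i < p"
begin

abbreviation "F \<equiv> Fpn p n"
abbreviation "G \<equiv> Gact p n e"

lemma p_pos: "0 < p" using prime_gt_0_nat[OF prime_p] .

lemma coord_range: "a \<in> F \<Longrightarrow> 0 \<le> a j \<and> a j < int p"
  using Fpn_coord_range[OF _ p_pos] .

lemma G_maps_F: "g \<in> G \<Longrightarrow> a \<in> F \<Longrightarrow> g a \<in> F"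
  using Gact_maps_Fpn[OF p_pos] .

lemma G_left_inverse: "g \<in> G \<Longrightarrow> \<exists>g'\<in>G. \<forall>a\<in>F. g' (g a) = a"
  using Gact_left_inverse[OF p_pos] n_ge_3 by simp

definition transvection :: "nat \<Rightarrow> ((nat \<Rightarrow> int) \<Rightarrow> int) \<Rightarrow> (nat \<Rightarrow> int) \<Rightarrow> nat \<Rightarrow> int" where
  "transvection i h a = a(i := (a i + h a) mod int p)"

definition coord_indep :: "nat \<Rightarrow> ((nat \<Rightarrow> int) \<Rightarrow> int) \<Rightarrow> bool" where
  "coord_indep i h \<longleftrightarrow>
     (\<forall>a\<in>F. \<forall>v. 0 \<le> v \<and> v < int p \<longrightarrow> [h (a(i := v)) = h a] (mod int p))"

definition realizable :: "nat \<Rightarrow> ((nat \<Rightarrow> int) \<Rightarrow> int) \<Rightarrow> bool" where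
  "realizable i h \<longleftrightarrow> i < n \<and> coord_indep i h \<and> (\<exists>g\<in>G. \<forall>a\<in>F. g a = transvection i h a)"

lemma transvection_in_F: "a \<in> F \<Longrightarrow> i < n \<Longrightarrow> transvection i h a \<in> F"
  unfolding transvection_def using Fpn_upd_mod p_pos by blast

lemma transvection_cong:
  assumes "[h a = h' a] (mod int p)"
  shows "transvection i h a = transvection i h' a"
proof -
  have "[a i + h a = a i + h' a] (mod int p)" using assms by (intro cong_add cong_refl)
  then show ?thesis unfolding transvection_def cong_def by simp
qed

lemma transvection_zero: "a \<in> F \<Longrightarrow> transvection i (\<lambda>_. 0) a = a"
  unfolding transvection_def using coord_range by simp

lemma coord_indepD:
  "coord_indep i h \<Longrightarrow> a \<in> F \<Longrightarrow> 0 \<le> v \<Longrightarrow> v < int p \<Longrightarrow> [h (a(i := v)) = h a] (mod int p)"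
  unfolding coord_indep_def by blast

lemma coord_indepI: "(\<And>a v. h (a(i := v)) = h a) \<Longrightarrow> coord_indep i h"
  unfolding coord_indep_def by simp

lemma transvection_comp:
  assumes "a \<in> F" and "coord_indep i h1"
  shows "transvection i h1 (transvection i h2 a) = transvection i (\<lambda>a. h1 a + h2 a) a"
proof -
  define w where "w = (a i + h2 a) mod int p"
  have "[h1 (a(i := w)) = h1 a] (mod int p)"
    using coord_indepD[OF assms(2,1)] p_pos unfolding w_def by simp
  then have "[w + h1 (a(i := w)) = (a i + h2 a) + h1 a] (mod int p)"
    unfolding w_def by (intro cong_add) (simp_all add: cong_def)
  then show ?thesis unfolding transvection_def w_def[symmetric] by (simp add: cong_def ac_simps)
qed

lemma transvection_conjugate:
  assumes a: "a \<in> F" and ij: "i \<noteq> j" "i < n"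
    and gj: "coord_indep j g" and gi: "coord_indep i g"
  shows "transvection j (\<lambda>a. - g a) (transvection i \<phi> (transvection j g a))
       = transvection i (\<lambda>a. \<phi> (transvection j g a)) a"
proof -
  define w where "w = (a j + g a) mod int p"
  define v where "v = (a i + \<phi> (a(j := w))) mod int p"
  have w: "0 \<le> w" "w < int p" and v: "0 \<le> v" "v < int p"
    unfolding w_def v_def using p_pos by simp_all
  have a1: "transvection j g a = a(j := w)" unfolding transvection_def w_def ..
  have a2: "transvection i \<phi> (a(j := w)) = a(i := v, j := w)"
    unfolding transvection_def v_def using ij by (simp add: fun_upd_twist)
  have "a(i := v) \<in> F" using Fpn_upd a ij(2) v by blast
  then have g_a2: "[g (a(i := v, j := w)) = g a] (mod int p)"
    using cong_trans[OF coord_indepD[OF gj _ w] coord_indepD[OF gi a v]] by blast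
  have "[w + - g (a(i := v, j := w)) = (a j + g a) + - g a] (mod int p)"
    using w_def by (intro cong_add cong_minus_minus_iff[THEN iffD2] g_a2) (simp add: cong_def)
  then have "(w + - g (a(i := v, j := w))) mod int p = a j"
    using coord_range[OF a, of j] by (simp add: cong_def)
  then have "transvection j (\<lambda>a. - g a) (a(i := v, j := w)) = a(i := v)"
    unfolding transvection_def using ij by (auto simp: fun_eq_iff)
  moreover have "transvection i (\<lambda>a. \<phi> (transvection j g a)) a = a(i := v)"
    by (simp add: transvection_def w_def v_def)
  ultimately show ?thesis using a1 a2 by simp
qed

lemma realizable_transvection:
  "realizable i h \<Longrightarrow> \<exists>g\<in>G. \<forall>a\<in>F. g a = transvection i h a"
  unfolding realizable_def by blast

lemma realizable_generator: "i < n \<Longrightarrow> realizable i (\<lambda>a. a ((i + 1) mod n) ^ e i)"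
  unfolding realizable_def
proof (intro conjI bexI)
  assume i: "i < n"
  show "coord_indep i (\<lambda>a. a ((i + 1) mod n) ^ e i)"
    using succ_mod_neq[of n i] i n_ge_3 by (intro coord_indepI) simp
  show "\<forall>a\<in>F. genActInv p n e i a = transvection i (\<lambda>a. a ((i + 1) mod n) ^ e i) a"
    by (simp add: genActInv_def transvection_def)
  show "genActInv p n e i \<in> G" using i by (rule genActInv_in_Gact)
qed

lemma realizable_zero: "i < n \<Longrightarrow> realizable i (\<lambda>_. 0)"
  unfolding realizable_def using Gact_id transvection_zero
  by (auto intro!: bexI[of _ id] coord_indepI)

lemma realizable_add:
  assumes "realizable i h1" "realizable i h2"
  shows "realizable i (\<lambda>a. h1 a + h2 a)"
proof -
  from assms obtain g1 g2 where i: "i < n" and ind: "coord_indep i h1" "coord_indep i h2"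
    and g1: "g1 \<in> G" "\<forall>a\<in>F. g1 a = transvection i h1 a"
    and g2: "g2 \<in> G" "\<forall>a\<in>F. g2 a = transvection i h2 a"
    unfolding realizable_def by blast
  have "\<forall>a\<in>F. (g1 \<circ> g2) a = transvection i (\<lambda>a. h1 a + h2 a) a"
    using g1(2) g2(2) transvection_in_F[OF _ i] transvection_comp[OF _ ind(1)] by simp
  moreover have "coord_indep i (\<lambda>a. h1 a + h2 a)"
    using ind unfolding coord_indep_def by (blast intro: cong_add)
  ultimately show ?thesis
    unfolding realizable_def using i Gact_comp[OF g1(1) g2(1)] by blast
qed

lemma realizable_cong:
  assumes "realizable i h" and "\<And>a. a \<in> F \<Longrightarrow> [h' a = h a] (mod int p)"
  shows "realizable i h'"
proof -
  from assms(1) obtain g where i: "i < n" and ind: "coord_indep i h"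
    and g: "g \<in> G" "\<forall>a\<in>F. g a = transvection i h a"
    unfolding realizable_def by blast
  have "\<forall>a\<in>F. g a = transvection i h' a"
    using g(2) assms(2) transvection_cong by (metis cong_sym)
  moreover have "coord_indep i h'"
    unfolding coord_indep_def
  proof (intro ballI allI impI)
    fix a v assume a: "a \<in> F" and v: "0 \<le> v \<and> v < int p"
    have "a(i := v) \<in> F" using Fpn_upd a i v by blast
    then have "[h' (a(i := v)) = h (a(i := v))] (mod int p)" by (rule assms(2))
    also have "[h (a(i := v)) = h a] (mod int p)" using coord_indepD[OF ind a] v by blast
    also have "[h a = h' a] (mod int p)" using assms(2)[OF a] by (rule cong_sym)
    finally show "[h' (a(i := v)) = h' a] (mod int p)" .
  qed
  ultimately show ?thesis unfolding realizable_def using i g(1) by blast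
qed

lemma realizable_uminus:
  assumes "realizable i h"
  shows "realizable i (\<lambda>a. - h a)"
proof -
  from assms obtain g where i: "i < n" and ind: "coord_indep i h"
    and g: "g \<in> G" "\<forall>a\<in>F. g a = transvection i h a"
    unfolding realizable_def by blast
  obtain g' where g': "g' \<in> G" "\<forall>a\<in>F. g' (g a) = a" using G_left_inverse[OF g(1)] by blast
  have "\<forall>a\<in>F. g' a = transvection i (\<lambda>a. - h a) a"
  proof
    fix a assume a: "a \<in> F"
    have b: "transvection i (\<lambda>a. - h a) a \<in> F" using transvection_in_F a i by blast
    have "g (transvection i (\<lambda>a. - h a) a) = transvection i (\<lambda>a. h a + - h a) a"
      using g(2) b transvection_comp[OF a ind] by simp
    also have "\<dots> = a" using transvection_zero[OF a] by simp
    finally show "g' a = transvection i (\<lambda>a. - h a) a" using g'(2) b by metis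
  qed
  moreover have "coord_indep i (\<lambda>a. - h a)"
    using ind unfolding coord_indep_def by (blast intro: cong_minus_minus_iff[THEN iffD2])
  ultimately show ?thesis unfolding realizable_def using i g'(1) by blast
qed

lemma realizable_mult_left:
  assumes "realizable i h"
  shows "realizable i (\<lambda>a. c * h a)"
proof -
  have nat_mult: "realizable i (\<lambda>a. int k * h a)" for k
  proof (induction k)
    case 0
    then show ?case using realizable_zero assms unfolding realizable_def by simp
  next
    case (Suc k)
    then show ?case using realizable_add[OF assms Suc] by (simp add: algebra_simps)
  qed
  show ?thesis
  proof (cases "0 \<le> c")
    case True
    then show ?thesis using nat_mult[of "nat c"] by simp
  next
    case False
    then show ?thesis using realizable_uminus[OF nat_mult[of "nat (- c)"]] by simp
  qed
qed

lemma realizable_sum: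
  assumes "finite S" "i < n" "\<And>s. s \<in> S \<Longrightarrow> realizable i (h s)"
  shows "realizable i (\<lambda>a. \<Sum>s\<in>S. h s a)"
  using assms by (induction S rule: finite_induct) (auto intro: realizable_zero realizable_add)

lemma coord_indep_commutator:
  assumes fi: "coord_indep i f" and gi: "coord_indep i g" and ij: "i \<noteq> j" and j: "j < n"
  shows "coord_indep i (\<lambda>a. f a - f (transvection j g a))"
  unfolding coord_indep_def
proof (intro ballI allI impI)
  fix a v assume a: "a \<in> F" and v: "0 \<le> v \<and> v < int p"
  have "[a j + g (a(i := v)) = a j + g a] (mod int p)"
    using coord_indepD[OF gi a] v by (intro cong_add cong_refl) auto
  then have "transvection j g (a(i := v)) = (transvection j g a)(i := v)"
    unfolding transvection_def cong_def using ij by (simp add: fun_upd_twist)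
  then have "[f (transvection j g (a(i := v))) = f (transvection j g a)] (mod int p)"
    using coord_indepD[OF fi transvection_in_F[OF a j]] v by auto
  moreover have "[f (a(i := v)) = f a] (mod int p)" using coord_indepD[OF fi a] v by auto
  ultimately show "[f (a(i := v)) - f (transvection j g (a(i := v)))
      = f a - f (transvection j g a)] (mod int p)"
    by (intro cong_diff)
qed

lemma realizable_commutator:
  assumes f: "realizable i f" and g: "realizable j g" and ij: "i \<noteq> j" and gi: "coord_indep i g"
  shows "realizable i (\<lambda>a. f a - f (transvection j g a))"
proof -
  have i: "i < n" and fi: "coord_indep i f" using f unfolding realizable_def by auto
  have j: "j < n" and gj: "coord_indep j g" using g unfolding realizable_def by auto
  obtain \<gamma>f where \<gamma>f: "\<gamma>f \<in> G" "\<forall>a\<in>F. \<gamma>f a = transvection i f a"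
    using realizable_transvection[OF f] by blast
  obtain \<gamma>f' where \<gamma>f': "\<gamma>f' \<in> G" "\<forall>a\<in>F. \<gamma>f' a = transvection i (\<lambda>a. - f a) a"
    using realizable_transvection[OF realizable_uminus[OF f]] by blast
  obtain \<gamma>g where \<gamma>g: "\<gamma>g \<in> G" "\<forall>a\<in>F. \<gamma>g a = transvection j g a"
    using realizable_transvection[OF g] by blast
  obtain \<gamma>g' where \<gamma>g': "\<gamma>g' \<in> G" "\<forall>a\<in>F. \<gamma>g' a = transvection j (\<lambda>a. - g a) a"
    using realizable_transvection[OF realizable_uminus[OF g]] by blast
  have "(\<gamma>f \<circ> \<gamma>g' \<circ> \<gamma>f' \<circ> \<gamma>g) a = transvection i (\<lambda>a. f a - f (transvection j g a)) a"
    if a: "a \<in> F" for a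
  proof -
    have "(\<gamma>g' \<circ> \<gamma>f' \<circ> \<gamma>g) a
        = transvection j (\<lambda>a. - g a) (transvection i (\<lambda>a. - f a) (transvection j g a))"
      using \<gamma>f'(2) \<gamma>g(2) \<gamma>g'(2) transvection_in_F a i j by simp
    also have "\<dots> = transvection i (\<lambda>a. - f (transvection j g a)) a"
      by (rule transvection_conjugate[OF a ij i gj gi])
    finally show ?thesis
      using \<gamma>f(2) transvection_in_F[OF a i] transvection_comp[OF a fi] by simp
  qed
  moreover have "\<gamma>f \<circ> \<gamma>g' \<circ> \<gamma>f' \<circ> \<gamma>g \<in> G"
    using \<gamma>f(1) \<gamma>g'(1) \<gamma>f'(1) \<gamma>g(1) by (intro Gact_comp)
  moreover have "coord_indep i (\<lambda>a. f a - f (transvection j g a))"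
    using coord_indep_commutator[OF fi gi ij j] .
  ultimately show ?thesis unfolding realizable_def using i by blast
qed

lemma transvection_binomial_expansion:
  assumes a: "a \<in> F" and j: "j < n"
    and f_eq: "\<And>a. a \<in> F \<Longrightarrow> [f a = r a * a j ^ b] (mod int p)" and rj: "coord_indep j r"
  shows "[f (transvection j (\<lambda>a. d * g a) a) = r a * a j ^ b
    + (\<Sum>m\<in>{1..b}. r a * of_nat (b choose m) * a j ^ (b - m) * g a ^ m * d ^ m)] (mod int p)"
proof -
  define y where "y = a j + d * g a"
  have "[f (a(j := y mod int p)) = r (a(j := y mod int p)) * (y mod int p) ^ b] (mod int p)"
    using f_eq[OF Fpn_upd_mod[OF a j p_pos, of y]] by simp
  also have "[r (a(j := y mod int p)) * (y mod int p) ^ b = r a * y ^ b] (mod int p)"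
    using coord_indepD[OF rj a] p_pos by (intro cong_mult cong_pow) (simp_all add: cong_def)
  also have "r a * y ^ b = r a * a j ^ b
      + (\<Sum>m\<in>{1..b}. r a * of_nat (b choose m) * a j ^ (b - m) * g a ^ m * d ^ m)"
    unfolding y_def binomial_ring_split
    by (simp add: sum_distrib_left power_mult_distrib algebra_simps)
  finally show ?thesis unfolding transvection_def y_def .
qed

text \<open>The commutators with the multiples \<open>d g\<close> are polynomials in \<open>d\<close> without constant term, and
  the weighted power sums of \<open>power_sum_coefficient_cong\<close> pick out their \<open>d^k\<close> coefficient.\<close>

lemma realizable_binomial_term:
  assumes ij: "i \<noteq> j" and f: "realizable i f"
    and f_eq: "\<And>a. a \<in> F \<Longrightarrow> [f a = r a * a j ^ b] (mod int p)"
    and b: "1 \<le> b" "b \<le> p - 1" and k: "1 \<le> k" "k \<le> b"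
    and rj: "coord_indep j r" and ri: "coord_indep i r"
    and g: "realizable j g" and gi: "coord_indep i g"
  shows "realizable i (\<lambda>a. r a * a j ^ (b - k) * g a ^ k)"
proof -
  have i: "i < n" using f unfolding realizable_def by simp
  have j: "j < n" using g unfolding realizable_def by simp
  define C where "C d a = f a - f (transvection j (\<lambda>a. d * g a) a)" for d a
  have C_realizable: "realizable i (C d)" for d
    unfolding C_def using gi
    by (intro realizable_commutator[OF f realizable_mult_left[OF g] ij])
      (auto simp: coord_indep_def intro: cong_scalar_left)
  define T where "T m a = r a * of_nat (b choose m) * a j ^ (b - m) * g a ^ m" for m a
  have C_expand: "[C d a = - (\<Sum>m\<in>{1..b}. T m a * d ^ m)] (mod int p)" if a: "a \<in> F" for d a
    using cong_diff[OF f_eq[OF a] transvection_binomial_expansion[OF a j f_eq rj, of d g]]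
    unfolding C_def T_def by simp
  define H where "H a = (\<Sum>d\<in>{1..<int p}. d ^ (p - 1 - k) * C d a)" for a
  have "realizable i H"
    unfolding H_def using i by (intro realizable_sum realizable_mult_left C_realizable) auto
  have H_eq: "[H a = T k a] (mod int p)" if a: "a \<in> F" for a
  proof -
    have "[H a = (\<Sum>d\<in>{1..<int p}. d ^ (p - 1 - k) * - (\<Sum>m\<in>{1..b}. T m a * d ^ m))] (mod int p)"
      unfolding H_def by (intro cong_sum cong_mult cong_refl C_expand[OF a])
    also have "(\<Sum>d\<in>{1..<int p}. d ^ (p - 1 - k) * - (\<Sum>m\<in>{1..b}. T m a * d ^ m))
        = - (\<Sum>d\<in>{1..<int p}. d ^ (p - 1 - k) * (\<Sum>m\<in>{1..b}. T m a * d ^ m))"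
      by (simp add: sum_negf)
    also have "[- (\<Sum>d\<in>{1..<int p}. d ^ (p - 1 - k) * (\<Sum>m\<in>{1..b}. T m a * d ^ m))
        = - (- T k a)] (mod int p)"
      using power_sum_coefficient_cong[OF prime_p k b(2)]
      by (intro cong_minus_minus_iff[THEN iffD2])
    finally show ?thesis by simp
  qed
  have "b < p" using b p_pos by linarith
  then have "\<not> int p dvd int (b choose k)"
    using prime_not_dvd_choose[OF prime_p _ k(2)] by simp
  then have "coprime (int (b choose k)) (int p)"
    using prime_p by (simp add: prime_imp_coprime coprime_commute)
  then obtain u where u: "[int (b choose k) * u = 1] (mod int p)"
    using cong_solve_coprime_int by blast
  show ?thesis
  proof (rule realizable_cong[OF realizable_mult_left[OF \<open>realizable i H\<close>, of u]])
    fix a assume a: "a \<in> F"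
    have "[u * H a = u * T k a] (mod int p)" using H_eq[OF a] by (intro cong_mult cong_refl)
    also have "u * T k a = (int (b choose k) * u) * (r a * a j ^ (b - k) * g a ^ k)"
      unfolding T_def by (simp add: algebra_simps)
    also have "[\<dots> = 1 * (r a * a j ^ (b - k) * g a ^ k)] (mod int p)"
      using u by (intro cong_mult cong_refl)
    finally show "[r a * a j ^ (b - k) * g a ^ k = u * H a] (mod int p)" by (simp add: cong_sym)
  qed
qed

lemma realizable_substitute:
  assumes ij: "i \<noteq> j" and f: "realizable i (\<lambda>a. r a * a j ^ c)" and c: "1 \<le> c"
    and rj: "coord_indep j r" and ri: "coord_indep i r"
    and g: "realizable j g" and gi: "coord_indep i g"
  shows "realizable i (\<lambda>a. r a * g a ^ c)"
proof -
  have "0 < p - 1" using prime_gt_1_nat[OF prime_p] by simp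
  then obtain b where b: "1 \<le> b" "b \<le> p - 1" "[b = c] (mod p - 1)"
    by (rule cong_representative)
  have reduce: "[x ^ c = x ^ b] (mod int p)" for x :: int
    using power_cong_exponent[OF prime_p c b(1)] b(3) by (simp add: cong_sym)
  have "realizable i (\<lambda>a. r a * a j ^ (b - b) * g a ^ b)"
    using b reduce by (intro realizable_binomial_term[OF ij f _ b(1,2) b(1) order.refl rj ri g gi])
      (simp add: cong_scalar_left)
  then show ?thesis
    by (rule realizable_cong) (simp add: reduce cong_scalar_left)
qed

definition shift :: "nat \<Rightarrow> nat \<Rightarrow> nat" where
  "shift i l = (i + l) mod n"

definition exp_prod :: "nat \<Rightarrow> nat \<Rightarrow> nat" where
  "exp_prod i l = (\<Prod>m\<in>{1..<l}. e (shift i m))"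

lemma shift_less: "shift i l < n"
  using n_ge_3 by (simp add: shift_def)

lemma shift_shift: "shift (shift i l) m = shift i (l + m)"
  by (simp add: shift_def mod_add_left_eq add.assoc)

lemma shift_0: "i < n \<Longrightarrow> shift i 0 = i"
  by (simp add: shift_def)

lemma shift_n: "i < n \<Longrightarrow> shift i n = i"
  by (simp add: shift_def)

lemma shift_inj: "l < n \<Longrightarrow> m < n \<Longrightarrow> shift i l = shift i m \<Longrightarrow> l = m"
  unfolding shift_def using cong_add_lcancel_nat cong_less_modulus_unique_nat
  by (metis cong_def)

lemma shift_neq_self: "i < n \<Longrightarrow> 0 < l \<Longrightarrow> l < n \<Longrightarrow> shift i l \<noteq> i"
  using shift_inj[of l 0 i] shift_0 by auto

lemma shift_1_less: "i + 1 < n \<Longrightarrow> shift i 1 = i + 1"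
  by (simp add: shift_def)

lemma shift_1_last: "shift (n - 1) 1 = 0"
  using n_ge_3 by (simp add: shift_def)

lemma realizable_generator_shift:
  "realizable (shift i l) (\<lambda>a. a (shift i (Suc l)) ^ e (shift i l))"
proof -
  have "(shift i l + 1) mod n = shift i (Suc l)"
    using shift_shift[of i l 1] unfolding shift_def[of "shift i l"] by simp
  then show ?thesis using realizable_generator[OF shift_less, of i l] by simp
qed

lemma exp_prod_pos: "1 \<le> exp_prod i l"
  unfolding exp_prod_def using e_pos shift_less by (intro prod_ge_1) auto

lemma exp_prod_Suc: "1 \<le> l \<Longrightarrow> exp_prod i (Suc l) = exp_prod i l * e (shift i l)"
  unfolding exp_prod_def by (simp add: prod.atLeastLessThan_Suc)

lemma e_times_exp_prod: "i < n \<Longrightarrow> e i * exp_prod i n = (\<Prod>m<n. e m)"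
proof -
  assume i: "i < n"
  have "bij_betw (shift i) {..<n} {..<n}"
    using shift_inj shift_less by (intro bij_betw_imageI inj_onI endo_inj_surj) auto
  then have "(\<Prod>m<n. e m) = (\<Prod>m<n. e (shift i m))"
    by (simp add: prod.reindex_bij_betw)
  also have "\<dots> = e (shift i 0) * exp_prod i n"
  proof -
    have "{..<n} = insert 0 {1..<n}" using n_ge_3 by auto
    then show ?thesis by (simp add: exp_prod_def)
  qed
  finally show ?thesis using shift_0[OF i] by simp
qed

lemma coord_indep_power: "j \<noteq> i \<Longrightarrow> coord_indep i (\<lambda>a. a j ^ c)"
  by (rule coord_indepI) simp

lemma coord_indep_const: "coord_indep i (\<lambda>_. c)"
  by (rule coord_indepI) simp

lemma realizable_along_cycle:
  assumes i: "i < n" and A: "1 \<le> A" "A \<le> p - 1"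
    and start: "realizable i (\<lambda>a. a (shift i 1) ^ A)"
    and l: "2 \<le> l" "l \<le> n - 1"
  shows "realizable i (\<lambda>a. a (shift i 1) ^ (A - 1) * a (shift i l) ^ exp_prod i l)"
  using l
proof (induction l rule: nat_induct_at_least)
  case base
  have ne: "shift i 1 \<noteq> i" "shift i 2 \<noteq> i" using shift_neq_self[OF i] n_ge_3 by auto
  have "realizable i (\<lambda>a. 1 * a (shift i 1) ^ (A - 1) * (a (shift i 2) ^ e (shift i 1)) ^ 1)"
    by (rule realizable_binomial_term[OF ne(1)[symmetric] start _ A order.refl A(1) coord_indep_const
        coord_indep_const realizable_generator_shift[of i 1, unfolded Suc_1] coord_indep_power[OF ne(2)]])
      simp
  moreover have "exp_prod i 2 = e (shift i 1)" by (simp add: exp_prod_def numeral_2_eq_2)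
  ultimately show ?case by simp
next
  case (Suc l)
  have l_lt: "l < n" "Suc l < n" "1 < n" using Suc n_ge_3 by auto
  have ne: "shift i l \<noteq> i" "shift i (Suc l) \<noteq> i" "shift i 1 \<noteq> shift i l" "shift i 1 \<noteq> i"
    using shift_neq_self[OF i] shift_inj[of l 1 i] l_lt Suc(1) by auto
  have "realizable i (\<lambda>a. a (shift i 1) ^ (A - 1) * (a (shift i (Suc l)) ^ e (shift i l)) ^ exp_prod i l)"
    using Suc.IH Suc.prems
    by (intro realizable_substitute[OF ne(1)[symmetric] _ exp_prod_pos coord_indep_power[OF ne(3)]
        coord_indep_power[OF ne(4)] realizable_generator_shift coord_indep_power[OF ne(2)]]) simp
  then show ?case
    using Suc(1) by (simp add: exp_prod_Suc power_mult[symmetric] mult.commute)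
qed

lemma realizable_wraparound:
  assumes i: "i < n"
  shows "realizable (shift i (n - 1)) (\<lambda>a. a (shift i 1) ^ (e i * e (shift i (n - 1))))"
proof -
  define i' where "i' = shift i (n - 1)"
  have i'_next: "shift i (Suc (n - 1)) = i" using shift_n[OF i] n_ge_3 by simp
  have ne: "i' \<noteq> i" "shift i 1 \<noteq> i'"
    unfolding i'_def using shift_neq_self[OF i] shift_inj[of "n - 1" 1 i] n_ge_3 by auto
  have "realizable i' (\<lambda>a. 1 * a i ^ e i')"
    using realizable_generator_shift[of i "n - 1"] unfolding i'_next i'_def by simp
  then have "realizable i' (\<lambda>a. 1 * (a (shift i 1) ^ e i) ^ e i')"
    by (rule realizable_substitute[OF ne(1) _ e_pos[OF shift_less[of i "n - 1", folded i'_def]]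
        coord_indep_const coord_indep_const
        realizable_generator_shift[of i 0, unfolded shift_0[OF i] One_nat_def[symmetric]]
        coord_indep_power[OF ne(2)]])
  then show ?thesis unfolding i'_def by (simp add: power_mult)
qed

lemma realizable_exponent_step:
  assumes i: "i < n" and A: "1 \<le> A" "A \<le> p - 1"
    and start: "realizable i (\<lambda>a. a (shift i 1) ^ A)"
  shows "realizable i (\<lambda>a. a (shift i 1) ^ (A - 1 + (\<Prod>m<n. e m)))"
proof -
  define i' where "i' = shift i (n - 1)"
  have ne: "i \<noteq> i'" "shift i 1 \<noteq> i'" "shift i 1 \<noteq> i"
    unfolding i'_def using shift_neq_self[OF i, of "n - 1"] shift_neq_self[OF i, of 1]
      shift_inj[of "n - 1" 1 i] n_ge_3 by auto
  have "realizable i (\<lambda>a. a (shift i 1) ^ (A - 1) * a i' ^ exp_prod i (n - 1))"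
    unfolding i'_def using n_ge_3 by (intro realizable_along_cycle[OF i A start]) auto
  then have "realizable i (\<lambda>a. a (shift i 1) ^ (A - 1)
      * (a (shift i 1) ^ (e i * e i')) ^ exp_prod i (n - 1))"
    by (rule realizable_substitute[OF ne(1) _ exp_prod_pos coord_indep_power[OF ne(2)]
        coord_indep_power[OF ne(3)] realizable_wraparound[OF i, folded i'_def]
        coord_indep_power[OF ne(3)]])
  moreover have "e i * e i' * exp_prod i (n - 1) = (\<Prod>m<n. e m)"
    using e_times_exp_prod[OF i] exp_prod_Suc[of "n - 1" i] n_ge_3
    by (simp add: i'_def algebra_simps)
  ultimately show ?thesis by (simp add: power_mult[symmetric] power_add[symmetric])
qed

lemma realizable_exponent_orbit:
  assumes i: "i < n"
  shows "\<exists>A. 1 \<le> A \<and> A \<le> p - 1 \<and> [A = e i + m * ((\<Prod>m<n. e m) - 1)] (mod p - 1)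
    \<and> realizable i (\<lambda>a. a (shift i 1) ^ A)"
proof (induction m)
  case 0
  show ?case
    using realizable_generator_shift[of i 0] e_pos[OF i] e_lt_p[OF i]
    by (intro exI[of _ "e i"]) (simp add: shift_0[OF i])
next
  case (Suc m)
  define E where "E = (\<Prod>m<n. e m)"
  have E_pos: "1 \<le> E" unfolding E_def using e_pos by (intro prod_ge_1) auto
  obtain A where A: "1 \<le> A" "A \<le> p - 1" "[A = e i + m * (E - 1)] (mod p - 1)"
    and realA: "realizable i (\<lambda>a. a (shift i 1) ^ A)" using Suc unfolding E_def by blast
  have "0 < p - 1" using prime_gt_1_nat[OF prime_p] by simp
  then obtain B where B: "1 \<le> B" "B \<le> p - 1" "[B = A - 1 + E] (mod p - 1)"
    by (rule cong_representative)
  have "realizable i (\<lambda>a. a (shift i 1) ^ B)"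
  proof (rule realizable_cong[OF realizable_exponent_step[OF i A(1,2) realA]])
    fix a :: "nat \<Rightarrow> int"
    show "[a (shift i 1) ^ B = a (shift i 1) ^ (A - 1 + (\<Prod>m<n. e m))] (mod int p)"
      using B E_pos unfolding E_def by (intro power_cong_exponent[OF prime_p]) auto
  qed
  moreover have "[B = e i + Suc m * (E - 1)] (mod p - 1)"
  proof -
    have "A - 1 + E = A + (E - 1)" using A(1) E_pos by simp
    then have "[B = A + (E - 1)] (mod p - 1)" using B(3) by simp
    also have "[A + (E - 1) = e i + m * (E - 1) + (E - 1)] (mod p - 1)"
      using A(3) by (intro cong_add cong_refl)
    finally show ?thesis by (simp add: ac_simps)
  qed
  ultimately show ?case using B(1,2) unfolding E_def by blast
qed

lemma realizable_monomial:
  assumes i: "i < n" and cop: "coprime ((\<Prod>m<n. e m) - 1) (p - 1)"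
    and s: "1 \<le> s" "s \<le> p - 1"
  shows "realizable i (\<lambda>a. a (shift i 1) ^ s)"
proof -
  have "0 < p - 1" using prime_gt_1_nat[OF prime_p] by simp
  then obtain m where m: "[e i + m * ((\<Prod>m<n. e m) - 1) = s] (mod p - 1)"
    using cop by (rule cong_add_mult_solvable)
  obtain A where A: "1 \<le> A" "A \<le> p - 1" "[A = e i + m * ((\<Prod>m<n. e m) - 1)] (mod p - 1)"
    and realA: "realizable i (\<lambda>a. a (shift i 1) ^ A)"
    using realizable_exponent_orbit[OF i] by blast
  have "A = s" using A s cong_trans[OF A(3) m] by (intro cong_eq_if_in_range[of _ "p - 1"])
  then show ?thesis using realA by simp
qed

lemma realizable_indicator:
  assumes i: "i < n" and v: "1 \<le> v" "v < int p"
    and monomial: "\<And>s. 1 \<le> s \<Longrightarrow> s \<le> p - 1 \<Longrightarrow> realizable i (\<lambda>a. a (shift i 1) ^ s)"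
  shows "realizable i (\<lambda>a. w * (if a (shift i 1) = v then 1 else 0))"
proof -
  define h where "h a = - w * (\<Sum>s\<in>{1..p - 1}.
      of_nat ((p - 1) choose s) * (- v) ^ (p - 1 - s) * a (shift i 1) ^ s)" for a
  have "realizable i h"
    unfolding h_def using i monomial
    by (intro realizable_mult_left realizable_sum) (auto simp: mult.assoc)
  then show ?thesis
  proof (rule realizable_cong)
    fix a assume a: "a \<in> F"
    define y where "y = a (shift i 1)"
    have y: "0 \<le> y" "y < int p" using coord_range[OF a] y_def by auto
    \<comment> \<open>Lagrange interpolation: \<open>1 - (y - v) ^ (p - 1)\<close> is the indicator of \<open>y = v\<close>\<close>
    have h_eq: "h a = - w * ((y - v) ^ (p - 1) - (- v) ^ (p - 1))"
      using binomial_ring_split[of "- v" y "p - 1"] unfolding h_def y_def by simp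
    have not_dvd: "\<not> int p dvd (x - v)" if "0 \<le> x" "x < int p" "x \<noteq> v" for x
      using that v cong_less_imp_eq_int[of x "int p" v] by (auto simp: cong_iff_dvd_diff)
    have minus_v: "[(- v) ^ (p - 1) = 1] (mod int p)"
      using not_dvd[of 0] v by (intro fermat_little_int_unit prime_p) auto
    have y_v: "[(y - v) ^ (p - 1) = (if y = v then 0 else 1)] (mod int p)"
    proof (cases "y = v")
      case False
      then show ?thesis using fermat_little_int_unit[OF prime_p not_dvd[OF y False]] by simp
    qed (use prime_gt_1_nat[OF prime_p] in \<open>simp add: zero_power\<close>)
    have "[h a = - w * ((if y = v then 0 else 1) - 1)] (mod int p)"
      unfolding h_eq by (intro cong_mult cong_diff cong_refl y_v minus_v)
    then show "[w * (if a (shift i 1) = v then 1 else 0) = h a] (mod int p)"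
      unfolding y_def by (simp add: cong_sym split: if_splits)
  qed
qed

end

section \<open>Moving points to the standard tuple\<close>

locale cyclic_transvections_coprime = cyclic_transvections +
  assumes coprime_exponent: "coprime ((\<Prod>m<n. e m) - 1) (p - 1)"
begin

lemma indicator_transvection:
  assumes i: "i < n" and v: "1 \<le> v" "v < int p"
  shows "\<exists>g\<in>G. \<forall>a\<in>F. g a = a(i := (a i + w * (if a (shift i 1) = v then 1 else 0)) mod int p)"
  using realizable_indicator[OF i v realizable_monomial[OF i coprime_exponent]]
  unfolding realizable_def transvection_def by blast

definition std_pt :: "nat \<Rightarrow> nat \<Rightarrow> int" where
  "std_pt c = (\<lambda>j. if j = 0 then int c else 0)"

definition reach :: "nat \<Rightarrow> (nat \<Rightarrow> int) \<Rightarrow> (nat \<Rightarrow> int) \<Rightarrow> bool" where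
  "reach m y z \<longleftrightarrow> (\<exists>h\<in>G. (\<forall>c\<in>{1..m}. h (std_pt c) = std_pt c) \<and> h y = z)"

lemma reach_refl: "reach m y y"
  unfolding reach_def using Gact_id by (intro bexI[of _ id]) auto

lemma reach_trans: "reach m y z \<Longrightarrow> reach m z w \<Longrightarrow> reach m y w"
  unfolding reach_def by (metis Gact_comp comp_apply)

lemma std_pt_in_F: "c < p \<Longrightarrow> std_pt c \<in> F"
  unfolding std_pt_def Fpn_def using n_ge_3 by auto

text \<open>The indicator map keyed on \<open>x_(i+1) = y (shift i 1) \<noteq> 0\<close> fixes every \<open>std_pt c\<close>, since these
  vanish outside coordinate \<open>0\<close>; when \<open>shift i 1 = 0\<close> the key \<open>y 0 > m\<close> is needed instead.\<close>

lemma reach_update: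
  assumes i: "i < n" and y: "y \<in> F" and m: "m < p - 1"
    and key: "y (shift i 1) \<noteq> 0" "shift i 1 = 0 \<longrightarrow> int m < y 0"
    and t: "0 \<le> t" "t < int p"
  shows "reach m y (y(i := t))"
proof -
  define v where "v = y (shift i 1)"
  have v: "1 \<le> v" "v < int p" using coord_range[OF y, of "shift i 1"] key(1) v_def by auto
  obtain g where g: "g \<in> G"
    "\<forall>a\<in>F. g a = a(i := (a i + (t - y i) * (if a (shift i 1) = v then 1 else 0)) mod int p)"
    using indicator_transvection[OF i v] by blast
  have "g y = y(i := t)" using g(2) y t v_def by simp
  moreover have "g (std_pt c) = std_pt c" if c: "c \<in> {1..m}" for c
  proof -
    have c_F: "std_pt c \<in> F" using c m by (intro std_pt_in_F) auto
    have "std_pt c (shift i 1) \<noteq> v"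
      using c key(2) v v_def unfolding std_pt_def by (cases "shift i 1 = 0") auto
    then have "g (std_pt c) = (std_pt c)(i := std_pt c i mod int p)" using g(2) c_F by simp
    also have "std_pt c i mod int p = std_pt c i" using coord_range[OF c_F, of i] by simp
    finally show ?thesis by simp
  qed
  ultimately show ?thesis unfolding reach_def using g(1) by blast
qed

lemma fill_in_F:
  assumes "y \<in> F" "l \<le> n" "0 \<le> c" "c < int p"
  shows "(\<lambda>j. if k \<le> j \<and> j < l then c else y j) \<in> F"
  using assms unfolding Fpn_def by auto

lemma reach_fill:
  assumes y: "y \<in> F" and m: "m < p - 1" and kl: "1 \<le> k" "k \<le> l" "l \<le> n"
    and key: "if l < n then y l \<noteq> 0 else int m < y 0"
  shows "reach m y (\<lambda>j. if k \<le> j \<and> j < l then 1 else y j)"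
  using kl(2,1)
proof (induction k rule: inc_induct)
  case base
  have "(\<lambda>j. if l \<le> j \<and> j < l then 1 else y j) = y" by auto
  then show ?case using reach_refl by simp
next
  case (step k)
  define z where "z = (\<lambda>j. if Suc k \<le> j \<and> j < l then 1 else y j)"
  have z: "z \<in> F" unfolding z_def using fill_in_F[OF y kl(3)] prime_gt_1_nat[OF prime_p] by simp
  have "z (shift k 1) \<noteq> 0 \<and> (shift k 1 = 0 \<longrightarrow> int m < z 0)"
  proof (cases "Suc k < l")
    case True
    then show ?thesis using kl shift_1_less[of k] unfolding z_def by auto
  next
    case False
    then have "Suc k = l" using step.hyps by simp
    then show ?thesis
      using key kl shift_1_less[of k] shift_1_last step.prems unfolding z_def
      by (cases "l < n") auto
  qed
  then have "reach m z (z(k := 1))"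
    using step.hyps kl prime_gt_1_nat[OF prime_p] by (intro reach_update[OF _ z m]) auto
  moreover have "reach m y z" unfolding z_def using step.IH by simp
  moreover have "z(k := 1) = (\<lambda>j. if k \<le> j \<and> j < l then 1 else y j)"
    using step.hyps unfolding z_def by (auto simp: fun_eq_iff)
  ultimately show ?case using reach_trans by metis
qed

lemma reach_clear:
  assumes y: "y \<in> F" and m: "m < p - 1" and y0: "int m < y 0"
    and nonzero: "\<And>j. 1 \<le> j \<Longrightarrow> j < n \<Longrightarrow> y j \<noteq> 0" and k: "k < n"
  shows "reach m y (\<lambda>j. if 1 \<le> j \<and> j \<le> k then 0 else y j)"
  using k
proof (induction k)
  case 0
  have "(\<lambda>j. if 1 \<le> j \<and> j \<le> 0 then 0 else y j) = y" by auto
  then show ?case using reach_refl by simp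
next
  case (Suc k)
  define z where "z = (\<lambda>j. if 1 \<le> j \<and> j \<le> k then 0 else y j)"
  have z: "z \<in> F" unfolding z_def using y by (auto simp: Fpn_def)
  have "z (shift (Suc k) 1) \<noteq> 0 \<and> (shift (Suc k) 1 = 0 \<longrightarrow> int m < z 0)"
  proof (cases "Suc k + 1 < n")
    case True
    then show ?thesis using nonzero shift_1_less[OF True] unfolding z_def by simp
  next
    case False
    then have "Suc k = n - 1" using Suc.prems by simp
    then show ?thesis using shift_1_last y0 unfolding z_def by simp
  qed
  then have "reach m z (z(Suc k := 0))"
    using Suc.prems p_pos by (intro reach_update[OF _ z m]) auto
  moreover have "reach m y z" unfolding z_def using Suc by simp
  moreover have "z(Suc k := 0) = (\<lambda>j. if 1 \<le> j \<and> j \<le> Suc k then 0 else y j)"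
    unfolding z_def by (auto simp: fun_eq_iff)
  ultimately show ?case using reach_trans by metis
qed

lemma reach_std_pt_if_large:
  assumes y: "y \<in> F" and m: "m < p - 1" and y0: "int m < y 0"
  shows "reach m y (std_pt (m + 1))"
proof -
  define z1 where "z1 = (\<lambda>j. if 1 \<le> j \<and> j < n then 1 else y j)"
  have r1: "reach m y z1"
    unfolding z1_def using y0 n_ge_3 by (intro reach_fill[OF y m]) auto
  have z1: "z1 \<in> F" unfolding z1_def using fill_in_F[OF y] prime_gt_1_nat[OF prime_p] by simp
  define z2 where "z2 = z1(0 := int (m + 1))"
  have r2: "reach m z1 z2"
    unfolding z2_def using n_ge_3 m shift_1_less[of 0]
    by (intro reach_update[OF _ z1 m]) (auto simp: z1_def)
  have z2: "z2 \<in> F" unfolding z2_def using m n_ge_3 by (intro Fpn_upd[OF z1]) auto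
  have r3: "reach m z2 (\<lambda>j. if 1 \<le> j \<and> j \<le> n - 1 then 0 else z2 j)"
    using n_ge_3 by (intro reach_clear[OF z2 m]) (auto simp: z2_def z1_def)
  have "(\<lambda>j. if 1 \<le> j \<and> j \<le> n - 1 then 0 else z2 j) = std_pt (m + 1)"
    using y n_ge_3 unfolding z2_def z1_def std_pt_def Fpn_def by (auto simp: fun_eq_iff)
  then show ?thesis using reach_trans[OF reach_trans[OF r1 r2] r3] by simp
qed

lemma reach_large_first_coord:
  assumes y: "y \<in> F" "y \<noteq> zeroPt" and m: "m < p - 1"
    and not_std: "\<forall>c\<in>{1..m}. y \<noteq> std_pt c"
  shows "\<exists>z\<in>F. reach m y z \<and> int m < z 0"
proof (cases "int m < y 0")
  case True
  then show ?thesis using y reach_refl by blast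
next
  case False
  have "\<exists>l. 1 \<le> l \<and> l < n \<and> y l \<noteq> 0"
  proof (rule ccontr)
    assume "\<nexists>l. 1 \<le> l \<and> l < n \<and> y l \<noteq> 0"
    then have y_out: "y j = 0" if "j \<noteq> 0" for j
      using y(1) that unfolding Fpn_def by (cases "j < n") auto
    then have "y = std_pt (nat (y 0))"
      using coord_range[OF y(1), of 0] unfolding std_pt_def by (auto simp: fun_eq_iff)
    moreover have "y 0 \<noteq> 0"
    proof
      assume "y 0 = 0"
      have "y = zeroPt"
        unfolding zeroPt_def
      proof
        fix j show "y j = 0" using y_out \<open>y 0 = 0\<close> by (cases "j = 0") auto
      qed
      then show False using y(2) by contradiction
    qed
    ultimately show False using not_std False coord_range[OF y(1), of 0] by force
  qed
  then obtain l where l: "1 \<le> l" "l < n" "y l \<noteq> 0" by blast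
  define z1 where "z1 = (\<lambda>j. if 1 \<le> j \<and> j < l then 1 else y j)"
  have r1: "reach m y z1" unfolding z1_def using l by (intro reach_fill[OF y(1) m]) auto
  have z1: "z1 \<in> F" "z1 1 \<noteq> 0"
    unfolding z1_def using fill_in_F[OF y(1)] prime_gt_1_nat[OF prime_p] l by auto
  have "reach m z1 (z1(0 := int (m + 1)))"
    using n_ge_3 m z1(2) shift_1_less[of 0] by (intro reach_update[OF _ z1(1) m]) auto
  moreover have "z1(0 := int (m + 1)) \<in> F" using m n_ge_3 by (intro Fpn_upd[OF z1(1)]) auto
  ultimately show ?thesis using reach_trans[OF r1] by fastforce
qed

lemma reach_next_std_pt:
  assumes "y \<in> F" "y \<noteq> zeroPt" "m < p - 1" "\<forall>c\<in>{1..m}. y \<noteq> std_pt c"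
  shows "reach m y (std_pt (m + 1))"
  using reach_large_first_coord[OF assms] reach_std_pt_if_large[OF _ assms(3)] reach_trans by blast

lemma G_inj_on_F: "g \<in> G \<Longrightarrow> a \<in> F \<Longrightarrow> b \<in> F \<Longrightarrow> g a = g b \<Longrightarrow> a = b"
  using G_left_inverse by metis

lemma map_to_std_pts:
  assumes "length xs \<le> p - 1" "distinct xs" "set xs \<subseteq> F - {zeroPt}"
  shows "\<exists>g\<in>G. map g xs = map std_pt [1..<length xs + 1]"
  using assms
proof (induction xs rule: rev_induct)
  case Nil
  then show ?case using Gact_id by auto
next
  case (snoc y ys)
  define k where "k = length ys"
  have k: "k < p - 1" using snoc.prems k_def by simp
  obtain g where g: "g \<in> G" "map g ys = map std_pt [1..<k + 1]"
    using snoc k_def by auto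
  have y: "y \<in> F" "y \<noteq> zeroPt" "y \<notin> set ys" and ys: "set ys \<subseteq> F" using snoc.prems by auto
  have gy: "g y \<in> F" "g y \<noteq> zeroPt"
    using G_maps_F[OF g(1) y(1)] G_inj_on_F[OF g(1) y(1) zeroPt_in_Fpn[OF p_pos]] y(2)
      Gact_fixes_zero[OF _ g(1)] e_pos by auto
  have "g y \<noteq> std_pt c" if c: "c \<in> {1..k}" for c
  proof
    assume "g y = std_pt c"
    also have "std_pt c = map std_pt [1..<k + 1] ! (c - 1)"
      using c by (auto simp del: upt.simps)
    also have "\<dots> = map g ys ! (c - 1)" by (simp only: g(2))
    also have "\<dots> = g (ys ! (c - 1))" using c k_def by auto
    finally show False using G_inj_on_F[OF g(1) y(1)] ys y(3) c k_def by force
  qed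
  then obtain h where h: "h \<in> G" "\<forall>c\<in>{1..k}. h (std_pt c) = std_pt c" "h (g y) = std_pt (k + 1)"
    using reach_next_std_pt[OF gy k] unfolding reach_def by blast
  have "map (h \<circ> g) (ys @ [y]) = map h (map g ys) @ [h (g y)]" by simp
  also have "\<dots> = map h (map std_pt [1..<k + 1]) @ [std_pt (k + 1)]" by (simp only: g(2) h(3))
  also have "map h (map std_pt [1..<k + 1]) = map std_pt [1..<k + 1]"
    using h(2) by (auto intro: map_idI)
  also have "map std_pt [1..<k + 1] @ [std_pt (k + 1)] = map std_pt [1..<length (ys @ [y]) + 1]"
    using k_def by simp
  finally show ?case using Gact_comp[OF h(1) g(1)] by blast
qed

lemma k_transitive: "k_transitive_on (p - 1) G (F - {zeroPt})"
  unfolding k_transitive_on_def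
proof (intro allI impI)
  fix xs ys :: "(nat \<Rightarrow> int) list"
  assume a: "length xs = p - 1 \<and> length ys = p - 1 \<and> distinct xs \<and> distinct ys \<and>
    set xs \<subseteq> F - {zeroPt} \<and> set ys \<subseteq> F - {zeroPt}"
  obtain gx where gx: "gx \<in> G" "map gx xs = map std_pt [1..<p]"
    using map_to_std_pts[of xs] a p_pos by auto
  obtain gy where gy: "gy \<in> G" "map gy ys = map std_pt [1..<p]"
    using map_to_std_pts[of ys] a p_pos by auto
  obtain gy' where gy': "gy' \<in> G" "\<forall>a\<in>F. gy' (gy a) = a" using G_left_inverse[OF gy(1)] by blast
  have "map (gy' \<circ> gx) xs = map gy' (map gy ys)"
    by (simp only: map_map[symmetric] gx(2) gy(2))
  also have "\<dots> = ys" using gy'(2) a unfolding map_map by (intro map_idI) auto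
  finally show "\<exists>g\<in>G. map g xs = ys" using Gact_comp[OF gy'(1) gx(1)] by blast
qed

end

theorem mainTheorem11:
  fixes p n :: nat and e :: "nat \<Rightarrow> nat"
  assumes "n \<ge> 3"
    and "\<forall>i<n. e i \<ge> 1"
    and "(\<Prod>i<n. e i) \<ge> 2"
    and "prime p"
    and "\<forall>i<n. e i < p"
    and "\<forall>x::int. 0 \<le> x \<and> x < int p \<and> [x ^ ((\<Prod>i<n. e i) - 1) = 1] (mod int p) \<longrightarrow> x = 1"
  shows "(\<forall>g\<in>Gact p n e. g zeroPt = zeroPt)
    \<and> k_transitive_on (p - 1) (Gact p n e) (Fpn p n - {zeroPt})"
proof -
  have "coprime ((\<Prod>i<n. e i) - 1) (p - 1)"
    using coprime_pred_if_trivial_roots[OF assms(4) _ assms(6)] assms(3) by simp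
  then interpret cyclic_transvections_coprime p n e
    using assms by unfold_locales auto
  show ?thesis using Gact_fixes_zero[OF assms(2)] k_transitive by blast
qed

end
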